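(* Let $L$ be a finite archimedean extension of $\mathbb{Z}_\mathrm{max}$. Then $\mathrm{ui}(L/\mathbb{Z}_\mathrm{max})<\infty$.
   Context: A semifield is a commutative semiring in which every nonzero element is a unit. $\mathbb{Z}_\mathrm{max}=\mathbb{Z}\cup\{-\infty\}$ is the semifield with addition $\max$ and multiplication ordinary addition. An extension of a semifield $K$ is a semifield $L$ with an injective homomorphism $K\to L$ (identify $K$ with its image); it is finite if $L$ is a finitely generated $K$-semimodule. For idempotent $K$, the extension is archimedean if for every $x\in L$ there is $y\in K$ with $x+y=y$. The unit index is $\mathrm{ui}(L/K)=|L^\times/K^\times|$. *)

theory Defs
  imports Main
begin

class semifield = comm_semiring_1 +
  assumes nonzero_unit: "x \<noteq> 0 \<Longrightarrow> \<exists>y. x * y = 1"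

datatype zmax = NegInf | Fin int

instantiation zmax :: semifield
begin

definition zero_zmax :: zmax where "zero_zmax = NegInf"
definition one_zmax :: zmax where "one_zmax = Fin 0"

fun plus_zmax :: "zmax \<Rightarrow> zmax \<Rightarrow> zmax" where
  "plus_zmax NegInf y = y"
| "plus_zmax x NegInf = x"
| "plus_zmax (Fin a) (Fin b) = Fin (max a b)"

fun times_zmax :: "zmax \<Rightarrow> zmax \<Rightarrow> zmax" where
  "times_zmax NegInf y = NegInf"
| "times_zmax x NegInf = NegInf"
| "times_zmax (Fin a) (Fin b) = Fin (a + b)"

instance
proof
  fix a b c :: zmax
  show "a + b + c = a + (b + c)" by (cases a; cases b; cases c) auto
  show "a + b = b + a" by (cases a; cases b) auto
  show "0 + a = a" by (simp add: zero_zmax_def)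
  show "a * b * c = a * (b * c)" by (cases a; cases b; cases c) auto
  show "a * b = b * a" by (cases a; cases b) auto
  show "1 * a = a" by (cases a) (auto simp: one_zmax_def)
  show "0 * a = 0" by (simp add: zero_zmax_def)
  show "a * 0 = 0" by (cases a) (auto simp: zero_zmax_def)
  show "(a + b) * c = a * c + b * c"
    by (cases a; cases b; cases c) (auto simp: max_def)
  show "(0::zmax) \<noteq> 1" by (simp add: zero_zmax_def one_zmax_def)
  show "a \<noteq> 0 \<Longrightarrow> \<exists>y. a * y = 1"
  proof -
    assume "a \<noteq> 0"
    then obtain n where "a = Fin n" by (cases a) (auto simp: zero_zmax_def)
    then show ?thesis by (intro exI[of _ "Fin (-n)"]) (simp add: one_zmax_def)
  qed
qed

end

definition units_set :: "'a::comm_semiring_1 set" where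
  "units_set = {x. \<exists>y. x * y = 1}"

definition semiring_hom :: "('a::comm_semiring_1 \<Rightarrow> 'b::comm_semiring_1) \<Rightarrow> bool" where
  "semiring_hom f \<longleftrightarrow> f 0 = 0 \<and> f 1 = 1 \<and>
     (\<forall>a b. f (a + b) = f a + f b) \<and> (\<forall>a b. f (a * b) = f a * f b)"

definition is_extension :: "('a::semifield \<Rightarrow> 'b::semifield) \<Rightarrow> bool" where
  "is_extension f \<longleftrightarrow> semiring_hom f \<and> inj f"

definition finite_extension :: "('a::semifield \<Rightarrow> 'b::semifield) \<Rightarrow> bool" where
  "finite_extension f \<longleftrightarrow> is_extension f \<and>
     (\<exists>S::'b set. finite S \<and> (\<forall>x. \<exists>c. x = (\<Sum>s\<in>S. f (c s) * s)))"

definition archimedean_extension :: "('a::semifield \<Rightarrow> 'b::semifield) \<Rightarrow> bool" where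
  "archimedean_extension f \<longleftrightarrow> (\<forall>x. \<exists>y. x + f y = f y)"

text \<open>The quotient group L^\<times>/K^\<times> as its set of cosets u K^\<times>.\<close>
definition unit_quotient :: "('a::semifield \<Rightarrow> 'b::semifield) \<Rightarrow> 'b set set" where
  "unit_quotient f = (\<lambda>u. (\<lambda>k. u * f k) ` units_set) ` units_set"

end

theory Submission
  imports Defs "HOL-Library.FuncSet"
begin

text \<open>Since \<open>1 + 1 = 1\<close> in \<open>\<int>\<^sub>max\<close>, the extension \<open>L\<close> is idempotent, hence ordered by
  \<open>x \<le> y \<longleftrightarrow> x + y = y\<close>. By the archimedean property every nonzero generator \<open>s\<close> of \<open>L\<close>
  lies between \<open>t\<^sup>-\<^sup>m\<close> and \<open>t\<^sup>m\<close>, where \<open>t\<^sup>j\<close> is the image of \<open>Fin j\<close> and \<open>m\<close> does not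
  depend on \<open>s\<close>. Write a unit \<open>u\<close> as \<open>\<Sum> t\<^sup>k\<^sup>s s\<close> and multiply by \<open>t\<^sup>-\<^sup>K\<close>, \<open>K\<close> the largest
  exponent, attained at \<open>s\<^sub>0\<close>. A term with exponent below \<open>-2m\<close> is then at most
  \<open>t\<^sup>-\<^sup>m \<le> s\<^sub>0\<close> and is absorbed, so the coset of \<open>u\<close> contains a sum whose exponents lie
  in \<open>{-2m..0}\<close>; there are only finitely many such sums.\<close>

lemma add_absorb_trans:
  fixes x y z :: "'a::semigroup_add"
  shows "x + y = y \<Longrightarrow> y + z = z \<Longrightarrow> x + z = z"
  by (metis add.assoc)

lemma add_absorb_mult_right:
  fixes x y z :: "'a::semiring"
  shows "x + y = y \<Longrightarrow> x * z + y * z = y * z"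
  by (metis distrib_right)

lemma sum_add_absorb:
  fixes g :: "'s \<Rightarrow> 'a::comm_monoid_add"
  assumes "finite X" and "\<forall>x\<in>X. g x + b = b"
  shows "sum g X + b = b"
  using assms
proof (induction X rule: finite_induct)
  case (insert x X)
  then have "sum g (insert x X) + b = g x + (sum g X + b)" by (simp add: add.assoc)
  then show ?case using insert by simp
qed simp

lemma sum_absorb_outside:
  fixes g :: "'s \<Rightarrow> 'a::comm_monoid_add"
  assumes idem: "\<And>x::'a. x + x = x" and "finite A" "B \<subseteq> A" "b \<in> B"
    and absorbed: "\<forall>x\<in>A - B. g x + g b = g b"
  shows "sum g A = sum g B"
proof -
  have "finite B" using assms(2,3) finite_subset by blast
  then have "sum g B = g b + sum g (B - {b})" using \<open>b \<in> B\<close> by (simp add: sum.remove)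
  then have B_absorbs: "g b + sum g B = sum g B" by (metis add.assoc idem)
  have "sum g A = sum g (A - B) + sum g B" using assms(2,3) by (simp add: sum.subset_diff)
  also have "\<dots> = (sum g (A - B) + g b) + sum g B" using B_absorbs by (simp add: add.assoc)
  also have "\<dots> = sum g B" using sum_add_absorb[OF _ absorbed] assms(2) B_absorbs by simp
  finally show ?thesis .
qed

lemma units_set_mult_closed:
  fixes a b :: "'a::comm_semiring_1"
  assumes "a \<in> units_set" "b \<in> units_set"
  shows "a * b \<in> units_set"
proof -
  obtain a' b' where "a * a' = 1" "b * b' = 1" using assms by (auto simp: units_set_def)
  then have "(a * b) * (a' * b') = 1" by (metis mult.assoc mult.left_commute mult_1_right)
  then show ?thesis by (auto simp: units_set_def)
qed

lemma units_set_nonzero: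
  "(u::'a::comm_semiring_1) \<in> units_set \<Longrightarrow> u \<noteq> 0"
  by (auto simp: units_set_def)

lemma Fin_units_set: "Fin k \<in> units_set"
  by (auto simp: units_set_def one_zmax_def intro!: exI[of _ "Fin (- k)"])

fun truncate_below :: "int \<Rightarrow> zmax \<Rightarrow> zmax" where
  "truncate_below n NegInf = NegInf"
| "truncate_below n (Fin j) = (if j < n then NegInf else Fin j)"

definition normalized_sums :: "(zmax \<Rightarrow> 'b::comm_semiring_1) \<Rightarrow> 'b set \<Rightarrow> int \<Rightarrow> 'b set" where
  "normalized_sums f S m =
     (\<lambda>c. \<Sum>s\<in>S. f (c s) * s) ` (S \<rightarrow>\<^sub>E insert NegInf (Fin ` {-2*m..0}))"

lemma finite_normalized_sums: "finite S \<Longrightarrow> finite (normalized_sums f S m)"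
  unfolding normalized_sums_def by (intro finite_imageI finite_PiE) auto

lemma exists_shift_max_to_zero:
  fixes c :: "'s \<Rightarrow> zmax"
  assumes "finite S" "s1 \<in> S" "c s1 \<noteq> NegInf"
  obtains K s0 where "s0 \<in> S" "c s0 * Fin K = Fin 0"
    and "\<forall>s\<in>S. \<forall>j. c s * Fin K = Fin j \<longrightarrow> j \<le> 0"
proof -
  define E where "E = {j. \<exists>s\<in>S. c s = Fin j}"
  have "E \<subseteq> (\<lambda>s. case c s of Fin j \<Rightarrow> j | NegInf \<Rightarrow> 0) ` S" by (force simp: E_def)
  then have "finite E" using assms(1) finite_subset by blast
  moreover have "E \<noteq> {}" using assms(2,3) by (cases "c s1") (auto simp: E_def)
  ultimately obtain s0 where s0: "s0 \<in> S" "c s0 = Fin (Max E)"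
    using Max_in unfolding E_def by blast
  have "j \<le> 0" if "s \<in> S" "c s * Fin (- Max E) = Fin j" for s j
  proof (cases "c s")
    case (Fin i)
    then have "i \<in> E" using that(1) by (auto simp: E_def)
    then show ?thesis using Fin that(2) \<open>finite E\<close> by auto
  qed (use that in simp)
  with s0 show thesis by (intro that[of s0 "- Max E"]) auto
qed

abbreviation between_powers :: "(zmax \<Rightarrow> 'b::comm_semiring_1) \<Rightarrow> int \<Rightarrow> 'b \<Rightarrow> bool" where
  "between_powers f m s \<equiv> f (Fin (- m)) + s = s \<and> s + f (Fin m) = f (Fin m)"

locale zmax_semiring_hom =
  fixes f :: "zmax \<Rightarrow> 'b::comm_semiring_1"
  assumes hom: "semiring_hom f"
begin

lemma f_mult: "f (x * y) = f x * f y"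
  using hom by (simp add: semiring_hom_def)

lemma f_NegInf [simp]: "f NegInf = 0"
  using hom by (metis semiring_hom_def zero_zmax_def)

lemma f_Fin_0 [simp]: "f (Fin 0) = 1"
  using hom by (metis semiring_hom_def one_zmax_def)

lemma f_Fin_mult: "f (Fin a) * f (Fin b) = f (Fin (a + b))"
  by (metis f_mult times_zmax.simps(3))

lemma f_Fin_mono: "a \<le> b \<Longrightarrow> f (Fin a) + f (Fin b) = f (Fin b)"
  using hom by (metis semiring_hom_def plus_zmax.simps(3) max_absorb2)

lemma add_idem: "x + x = (x::'b)"
proof -
  have "(1::'b) + 1 = 1" using f_Fin_mono[of 0 0] by simp
  then show ?thesis by (metis distrib_left mult_1_right)
qed

lemma coset_mult_unit:
  assumes "a \<in> units_set"
  shows "(\<lambda>k. u * f a * f k) ` units_set = (\<lambda>k. u * f k) ` units_set"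
proof -
  obtain a' where a': "a * a' = 1" using assms by (auto simp: units_set_def)
  have "a' \<in> units_set" using a' by (auto simp: units_set_def mult.commute)
  have "f a * f a' = 1" using a' hom by (metis f_mult semiring_hom_def)
  show ?thesis
  proof (intro equalityI image_subsetI)
    fix k :: zmax assume "k \<in> units_set"
    have "u * f a * f k = u * f (a * k)" by (simp add: f_mult mult.assoc)
    then show "u * f a * f k \<in> (\<lambda>k. u * f k) ` units_set"
      using units_set_mult_closed[OF assms \<open>k \<in> units_set\<close>] by (rule image_eqI)
  next
    fix k :: zmax assume "k \<in> units_set"
    have "u * f a * f (a' * k) = u * (f a * f a') * f k" by (simp add: f_mult ac_simps)
    then have "u * f k = u * f a * f (a' * k)" using \<open>f a * f a' = 1\<close> by simp
    then show "u * f k \<in> (\<lambda>k. u * f a * f k) ` units_set"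
      using units_set_mult_closed[OF \<open>a' \<in> units_set\<close> \<open>k \<in> units_set\<close>] by (rule image_eqI)
  qed
qed

lemma small_term_absorbed:
  assumes "s + f (Fin m) = f (Fin m)" "f (Fin (- m)) + t = t" "j < - 2 * m"
  shows "f (Fin j) * s + t = t"
proof -
  have "f (Fin j) * s + f (Fin (j + m)) = f (Fin (j + m))"
    using add_absorb_mult_right[OF assms(1), of "f (Fin j)"] by (simp add: f_Fin_mult mult.commute)
  moreover have "f (Fin (j + m)) + f (Fin (- m)) = f (Fin (- m))"
    using assms(3) by (intro f_Fin_mono) simp
  ultimately show ?thesis using assms(2) add_absorb_trans by metis
qed

lemma sum_truncate_below:
  assumes "finite S" "0 \<le> m" "s0 \<in> S" "d s0 = Fin 0"
    and bounds: "\<forall>s\<in>S. between_powers f m s"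
  shows "(\<Sum>s\<in>S. f (d s) * s) = (\<Sum>s\<in>S. f (truncate_below (- 2 * m) (d s)) * s)"
proof -
  define B where "B = {s\<in>S. truncate_below (- 2 * m) (d s) = d s}"
  have "s0 \<in> B" using assms(2-4) by (simp add: B_def)
  have "f (d s) * s + f (d s0) * s0 = f (d s0) * s0" if s: "s \<in> S - B" for s
  proof -
    obtain j where "d s = Fin j" "j < - 2 * m"
      using s by (cases "d s") (auto simp: B_def split: if_splits)
    have "s + f (Fin m) = f (Fin m)" "f (Fin (- m)) + s0 = s0"
      using bounds s \<open>s0 \<in> S\<close> by blast+
    then have "f (Fin j) * s + s0 = s0"
      using \<open>j < - 2 * m\<close> by (rule small_term_absorbed)
    then show ?thesis using \<open>d s = Fin j\<close> \<open>d s0 = Fin 0\<close> by simp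
  qed
  then have "(\<Sum>s\<in>S. f (d s) * s) = (\<Sum>s\<in>B. f (d s) * s)"
    using assms(1) \<open>s0 \<in> B\<close> by (intro sum_absorb_outside[OF add_idem]) (auto simp: B_def)
  also have "\<dots> = (\<Sum>s\<in>S. f (truncate_below (- 2 * m) (d s)) * s)"
  proof (rule sum.mono_neutral_cong_left[OF assms(1)])
    show "\<forall>s\<in>S - B. f (truncate_below (- 2 * m) (d s)) * s = 0"
    proof
      fix s assume "s \<in> S - B"
      then have "truncate_below (- 2 * m) (d s) = NegInf"
        by (cases "d s") (auto simp: B_def split: if_splits)
      then show "f (truncate_below (- 2 * m) (d s)) * s = 0" by simp
    qed
  qed (auto simp: B_def)
  finally show ?thesis .
qed

lemma nonzero_sum_normalizes:
  assumes "finite S" "0 \<le> m"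
    and bounds: "\<forall>s\<in>S. between_powers f m s"
    and nonzero: "(\<Sum>s\<in>S. f (c s) * s) \<noteq> 0"
  shows "\<exists>K. (\<Sum>s\<in>S. f (c s) * s) * f (Fin K) \<in> normalized_sums f S m"
proof -
  obtain s1 where "s1 \<in> S" "c s1 \<noteq> NegInf"
  proof (rule ccontr)
    assume "\<not> thesis"
    with that have "\<forall>s\<in>S. c s = NegInf" by blast
    then have "\<forall>s\<in>S. f (c s) * s = 0" by simp
    then have "(\<Sum>s\<in>S. f (c s) * s) = 0" by (rule sum.neutral)
    with nonzero show False by contradiction
  qed
  then obtain K s0 where s0: "s0 \<in> S" "c s0 * Fin K = Fin 0"
    and nonpos: "\<forall>s\<in>S. \<forall>j. c s * Fin K = Fin j \<longrightarrow> j \<le> 0"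
    by (rule exists_shift_max_to_zero[OF assms(1)])
  define c' where "c' = restrict (\<lambda>s. truncate_below (- 2 * m) (c s * Fin K)) S"
  have c'_range: "c' \<in> S \<rightarrow>\<^sub>E insert NegInf (Fin ` {-2*m..0})"
  proof
    fix s assume "s \<in> S"
    then show "c' s \<in> insert NegInf (Fin ` {-2*m..0})"
      using nonpos by (cases "c s * Fin K") (auto simp: c'_def)
  qed (simp add: c'_def)
  have "(\<Sum>s\<in>S. f (c s) * s) * f (Fin K) = (\<Sum>s\<in>S. f (c' s) * s)"
  proof -
    have "(\<Sum>s\<in>S. f (c s) * s) * f (Fin K) = (\<Sum>s\<in>S. f (c s * Fin K) * s)"
      unfolding sum_distrib_right by (rule sum.cong) (simp_all add: f_mult ac_simps)
    also have "\<dots> = (\<Sum>s\<in>S. f (truncate_below (- 2 * m) (c s * Fin K)) * s)"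
      by (rule sum_truncate_below[where d = "\<lambda>s. c s * Fin K", OF assms(1,2) s0 bounds])
    also have "\<dots> = (\<Sum>s\<in>S. f (c' s) * s)"
      by (rule sum.cong) (simp_all add: c'_def)
    finally show ?thesis .
  qed
  then have "(\<Sum>s\<in>S. f (c s) * s) * f (Fin K) \<in> normalized_sums f S m"
    unfolding normalized_sums_def using c'_range by (rule image_eqI)
  then show ?thesis ..
qed

lemma unit_coset_normalized:
  assumes "finite S" "0 \<le> m" "\<forall>s\<in>S. between_powers f m s"
    and "u \<in> units_set" "u = (\<Sum>s\<in>S. f (c s) * s)"
  shows "(\<lambda>k. u * f k) ` units_set \<in> (\<lambda>v. (\<lambda>k. v * f k) ` units_set) ` normalized_sums f S m"
proof -
  have "(\<Sum>s\<in>S. f (c s) * s) \<noteq> 0" using units_set_nonzero[OF assms(4)] assms(5) by simp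
  from nonzero_sum_normalizes[OF assms(1-3) this]
  obtain K where "(\<Sum>s\<in>S. f (c s) * s) * f (Fin K) \<in> normalized_sums f S m" ..
  then have K: "u * f (Fin K) \<in> normalized_sums f S m" unfolding assms(5) .
  have "(\<lambda>k. u * f k) ` units_set = (\<lambda>k. u * f (Fin K) * f k) ` units_set"
    by (rule coset_mult_unit[OF Fin_units_set, symmetric])
  then show ?thesis using K by (rule image_eqI)
qed

end

locale archimedean_zmax_extension = zmax_semiring_hom f
  for f :: "zmax \<Rightarrow> 'b::semifield" +
  assumes archimedean: "archimedean_extension f"
begin

lemma Fin_upper_bound: "\<exists>a. x + f (Fin a) = f (Fin a)"
proof -
  obtain y where y: "x + f y = f y" using archimedean by (auto simp: archimedean_extension_def)
  show ?thesis
  proof (cases y)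
    case NegInf
    then show ?thesis using y by simp
  qed (use y in blast)
qed

text \<open>A lower bound for \<open>x\<close> is an inverted upper bound for \<open>x\<^sup>-\<^sup>1\<close>.\<close>
lemma Fin_lower_bound:
  assumes "x \<noteq> 0"
  shows "\<exists>a. f (Fin a) + x = x"
proof -
  obtain y where xy: "x * y = 1" using nonzero_unit assms by blast
  obtain a where "y + f (Fin a) = f (Fin a)" using Fin_upper_bound by blast
  then have "y * (x * f (Fin (- a))) + f (Fin a) * (x * f (Fin (- a)))
      = f (Fin a) * (x * f (Fin (- a)))"
    by (rule add_absorb_mult_right)
  moreover have "y * (x * f (Fin (- a))) = (x * y) * f (Fin (- a))" by (simp only: ac_simps)
  moreover have "f (Fin a) * (x * f (Fin (- a))) = x * (f (Fin a) * f (Fin (- a)))"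
    by (simp only: ac_simps)
  ultimately have "f (Fin (- a)) + x = x" using xy by (simp add: f_Fin_mult)
  then show ?thesis ..
qed

lemma finite_set_Fin_bounds:
  assumes "finite S" "0 \<notin> S"
  shows "\<exists>m\<ge>0. \<forall>s\<in>S. between_powers f m s"
  using assms
proof (induction S rule: finite_induct)
  case (insert s S)
  then obtain m where "m \<ge> 0" and m: "\<forall>s\<in>S. between_powers f m s"
    by auto
  obtain a where a: "s + f (Fin a) = f (Fin a)" using Fin_upper_bound by blast
  have "s \<noteq> 0" using insert.prems by auto
  then obtain b where b: "f (Fin b) + s = s" using Fin_lower_bound by blast
  define m' where "m' = max m (max a (- b))"
  have low: "f (Fin (- m')) + t = t" if "f (Fin n) + t = t" "- m' \<le> n" for t n
    using add_absorb_trans[OF f_Fin_mono that(1)] that(2) by simp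
  have up: "t + f (Fin m') = f (Fin m')" if "t + f (Fin n) = f (Fin n)" "n \<le> m'" for t n
    using add_absorb_trans[OF that(1) f_Fin_mono] that(2) by simp
  have "f (Fin (- m')) + s = s" "s + f (Fin m') = f (Fin m')"
    by (rule low[OF b], simp add: m'_def) (rule up[OF a], simp add: m'_def)
  moreover have "\<forall>t\<in>S. between_powers f m' t"
    using m low[of "- m"] up[of _ m] by (simp add: m'_def)
  ultimately have "\<forall>t\<in>insert s S. between_powers f m' t"
    by blast
  moreover have "0 \<le> m'" using \<open>m \<ge> 0\<close> by (simp add: m'_def)
  ultimately show ?case by blast
qed auto

end

theorem mainTheorem6:
  fixes f :: "zmax \<Rightarrow> 'b::semifield"
  assumes "finite_extension f"
    and "archimedean_extension f"
  shows "finite (unit_quotient f)"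
proof -
  obtain S where hom: "semiring_hom f" and "finite S"
    and span: "\<forall>x. \<exists>c. x = (\<Sum>s\<in>S. f (c s) * s)"
    using assms(1) by (auto simp: finite_extension_def is_extension_def)
  interpret archimedean_zmax_extension f
    using hom assms(2) by unfold_locales
  define S0 where "S0 = S - {0}"
  have "finite S0" "0 \<notin> S0" using \<open>finite S\<close> by (simp_all add: S0_def)
  then obtain m where "m \<ge> 0" and bounds: "\<forall>s\<in>S0. between_powers f m s"
    using finite_set_Fin_bounds by blast
  have "unit_quotient f \<subseteq> (\<lambda>v. (\<lambda>k. v * f k) ` units_set) ` normalized_sums f S0 m"
    unfolding unit_quotient_def
  proof (rule image_subsetI)
    fix u :: 'b assume "u \<in> units_set"
    obtain c where "u = (\<Sum>s\<in>S. f (c s) * s)" using span by blast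
    also have "\<dots> = (\<Sum>s\<in>S0. f (c s) * s)"
      unfolding S0_def using \<open>finite S\<close> by (intro sum.mono_neutral_right) auto
    finally show "(\<lambda>k. u * f k) ` units_set \<in> (\<lambda>v. (\<lambda>k. v * f k) ` units_set) ` normalized_sums f S0 m"
      by (rule unit_coset_normalized[OF \<open>finite S0\<close> \<open>m \<ge> 0\<close> bounds \<open>u \<in> units_set\<close>])
  qed
  then show ?thesis
    using finite_normalized_sums[OF \<open>finite S0\<close>] by (rule finite_subset[OF _ finite_imageI])
qed

end
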